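(* Let $\mathbb{K}$ be a field, $\mathbf{S}=(s_i)_{i\ge0}$ a sequence over $\mathbb{K}$ (with $s_i=0$ for $i<0$), and $\Theta(t)=t^{-1}\sum_{i\ge0}s_it^{-i}\in\mathbb{K}(\!(t^{-1})\!)$. For an integer $k\ge0$ write the continued fraction expansion $\langle t^k\Theta(t)\rangle=[0;A_1(t),A_2(t),\dots]$. Then the $k$-th diagonal $(\widetilde W(\mathbf{S})[m,k])_{m\ge0}$ of the number wall consists of successive blocks of zeros of lengths $\deg A_i-1$ separated by single nonzero entries. Explicitly, for $m\ge0$, $\widetilde W(\mathbf{S})[m,k]\ne0$ if and only if $m=\sum_{i=1}^{j}\deg A_i-1$ for some $j\ge1$.
   Context: $\langle\cdot\rangle$ denotes the fractional part of a Laurent series (removing all non-negative powers of $t$). Continued fraction partial quotients are polynomials of degree $\ge1$ after the zeroth. The number wall of $\mathbf{S}$: for $m\ge0$ and $n\in\mathbb{Z}$, $W(\mathbf{S})[m,n]=\det\big(s_{n-i+j}\big)_{0\le i,j\le m}$ (the determinant of the $(m+1)\times(m+1)$ Toeplitz matrix whose first row is $s_n,\dots,s_{n+m}$ and whose first column is $s_n,s_{n-1},\dots,s_{n-m}$); also $W[-1,n]=1$. The $k$-th diagonal entries are $\widetilde W(\mathbf{S})[m,k]:=W(\mathbf{S})[m,m+k]$. *)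

theory Defs
  imports "HOL-Computational_Algebra.Formal_Laurent_Series" "Jordan_Normal_Form.Determinant"
begin

text \<open>Laurent series in t^{-1} are modelled as formal Laurent series in the variable
  X = t^{-1} (type 'a fls); thus t = fls_X_inv.\<close>

definition tvar :: "'a::field fls" where
  "tvar = fls_X_inv"

definition Theta :: "(nat \<Rightarrow> 'a::field) \<Rightarrow> 'a fls" where
  "Theta s = fls_X * fps_to_fls (Abs_fps s)"

text \<open>Fractional part: remove all non-negative powers of t, i.e. keep X^n for n > 0.\<close>
definition frac_part :: "'a::field fls \<Rightarrow> 'a fls" where
  "frac_part f = Abs_fls (\<lambda>n. if 0 < n then fls_nth f n else 0)"

definition poly_part :: "'a::field fls \<Rightarrow> 'a poly" where
  "poly_part f = (\<Sum>j \<le> nat (- fls_subdegree f). monom (fls_nth f (- int j)) j)"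

text \<open>Continued fraction expansion [0; A_1, A_2, ...] of f with <f> = f:
  remainders x_0 = f, x_{i+1} = <1/x_i>, partial quotients A_{i+1} = polynomial part of 1/x_i
  (only meaningful while x_i is nonzero).\<close>
fun cf_rem :: "'a::field fls \<Rightarrow> nat \<Rightarrow> 'a fls" where
  "cf_rem f 0 = f"
| "cf_rem f (Suc i) = frac_part (inverse (cf_rem f i))"

definition cf_quot :: "'a::field fls \<Rightarrow> nat \<Rightarrow> 'a poly" where
  "cf_quot f i = poly_part (inverse (cf_rem f (i - 1)))"

definition cf_has_quot :: "'a::field fls \<Rightarrow> nat \<Rightarrow> bool" where
  "cf_has_quot f i \<longleftrightarrow> 1 \<le> i \<and> (\<forall>l < i. cf_rem f l \<noteq> 0)"

definition sext :: "(nat \<Rightarrow> 'a::zero) \<Rightarrow> int \<Rightarrow> 'a" where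
  "sext s i = (if i < 0 then 0 else s (nat i))"

definition number_wall :: "(nat \<Rightarrow> 'a::field) \<Rightarrow> nat \<Rightarrow> int \<Rightarrow> 'a" where
  "number_wall s m n = det (mat (Suc m) (Suc m) (\<lambda>(i, j). sext s (n - int i + int j)))"

definition wall_diag :: "(nat \<Rightarrow> 'a::field) \<Rightarrow> nat \<Rightarrow> nat \<Rightarrow> 'a" where
  "wall_diag s m k = number_wall s m (int m + int k)"

end

theory Submission
  imports Defs
begin

text \<open>Put F = <t^k Theta>, so that F has coefficients s_(k+i-1) at t^(-i) for i >= 1 and the
  diagonal entry W[m, m+k] is the determinant of the Toeplitz matrix (F_(n-i+j)) of size n = m+1.
  That determinant vanishes iff some nonzero polynomial q of degree < n makes q F free of the
  terms t^(-1), ..., t^(-n). If t^(-d) is the leading term of F, then deg A_1 = d, and such q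
  exists for n < d (take q = 1) but not for n = d. For n > d write 1/F = A_1 + G with
  G = <1/F>: splitting q F into polynomial and fractional part turns a solution for (n, F) into
  one for (n - d, G) and back. Following the continued fraction, the determinant is therefore
  nonzero exactly when n is one of the sums deg A_1 + ... + deg A_j.\<close>

no_notation index_mat (infixl "$$" 100)
notation fls_nth (infixl "$$" 75)
no_notation fps_nth (infixl "$" 75)

lemma frac_part_nth [simp]: "frac_part f $$ i = (if 0 < i then f $$ i else 0)"
  unfolding frac_part_def by (rule nth_Abs_fls_lower_bound[of 1]) auto

section \<open>Laurent series vanishing outside a range of degrees\<close>

definition fls_vanishes_below :: "'a::zero fls \<Rightarrow> int \<Rightarrow> bool" where
  "fls_vanishes_below f a \<longleftrightarrow> (\<forall>i<a. f $$ i = 0)"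

definition fls_vanishes_above :: "'a::zero fls \<Rightarrow> int \<Rightarrow> bool" where
  "fls_vanishes_above f b \<longleftrightarrow> (\<forall>i>b. f $$ i = 0)"

lemma fls_vanishes_below_iff_subdegree:
  "fls_vanishes_below f a \<longleftrightarrow> f = 0 \<or> a \<le> fls_subdegree f"
  unfolding fls_vanishes_below_def by (auto intro: fls_subdegree_geI)

lemma fls_vanishes_below_subdegree: "fls_vanishes_below f (fls_subdegree f)"
  by (simp add: fls_vanishes_below_iff_subdegree)

lemma fls_vanishes_below_mono:
  "fls_vanishes_below f a \<Longrightarrow> b \<le> a \<Longrightarrow> fls_vanishes_below f b"
  by (simp add: fls_vanishes_below_def)

lemma fls_vanishes_below_mult:
  fixes f g :: "'a::{comm_monoid_add,mult_zero} fls"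
  assumes "fls_vanishes_below f a" "fls_vanishes_below g b"
  shows "fls_vanishes_below (f * g) (a + b)"
proof (cases "f = 0 \<or> g = 0")
  case False
  then have "a \<le> fls_subdegree f" "b \<le> fls_subdegree g"
    using assms by (auto simp: fls_vanishes_below_iff_subdegree)
  then show ?thesis by (auto simp: fls_vanishes_below_def intro!: fls_times_nth_eq0)
qed (auto simp: fls_vanishes_below_def)

lemma fls_vanishes_above_mult:
  fixes f g :: "'a::{comm_monoid_add,mult_zero} fls"
  assumes f: "fls_vanishes_above f a" and g: "fls_vanishes_above g b"
  shows "fls_vanishes_above (f * g) (a + b)"
  unfolding fls_vanishes_above_def
proof (intro allI impI)
  fix n assume n: "n > a + b"
  have "f $$ i * g $$ (n - i) = 0" for i
    using f g n by (cases "i > a") (auto simp: fls_vanishes_above_def)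
  then show "(f * g) $$ n = 0" by (simp add: fls_times_nth(2))
qed

lemma fls_subdegree_le_if_vanishes_above:
  "fls_vanishes_above f b \<Longrightarrow> f \<noteq> 0 \<Longrightarrow> fls_subdegree f \<le> b"
  unfolding fls_vanishes_above_def by (metis linorder_not_le nth_fls_subdegree_nonzero)

lemma fls_vanishes_below_frac_part [simp]: "fls_vanishes_below (frac_part f) 1"
  by (simp add: fls_vanishes_below_def)

lemma fls_vanishes_above_minus_frac_part [simp]: "fls_vanishes_above (f - frac_part f) 0"
  by (simp add: fls_vanishes_above_def)

lemma fls_vanishes_below_minus_frac_part:
  "fls_vanishes_below f a \<Longrightarrow> fls_vanishes_below (f - frac_part f) a"
  by (simp add: fls_vanishes_below_def)

lemma fls_subdegree_minus_frac_part:
  assumes "f \<noteq> 0" "fls_subdegree f \<le> 0"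
  shows "fls_subdegree (f - frac_part f) = fls_subdegree f"
  using assms by (intro fls_subdegree_eqI) auto

section \<open>Toeplitz determinants\<close>

text \<open>Since X = t^(-1), q below is a nonzero polynomial in t of degree less than n, and the
  condition asks q f to have no terms t^(-1), ..., t^(-n).\<close>

definition toeplitz_singular :: "nat \<Rightarrow> 'a::field fls \<Rightarrow> bool" where
  "toeplitz_singular n f \<longleftrightarrow> (\<exists>q. q \<noteq> 0 \<and> fls_vanishes_above q 0 \<and>
      fls_vanishes_below q (1 - int n) \<and> (\<forall>i\<in>{1..int n}. (q * f) $$ i = 0))"

definition toeplitz_mat :: "nat \<Rightarrow> 'a::zero fls \<Rightarrow> 'a mat" where
  "toeplitz_mat n f = mat n n (\<lambda>(i, j). f $$ (int n - int i + int j))"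

definition fls_of_vec :: "'a::comm_ring_1 vec \<Rightarrow> 'a fls" where
  "fls_of_vec v = (\<Sum>j<dim_vec v. fls_const (v $ j) * fls_X_inv ^ j)"

lemma fls_of_vec_nth:
  "fls_of_vec v $$ i = (if - int (dim_vec v) < i \<and> i \<le> 0 then v $ nat (- i) else 0)"
proof -
  have "fls_of_vec v $$ i = (\<Sum>j<dim_vec v. if i = - int j then v $ j else 0)"
    unfolding fls_of_vec_def fls_nth_sum
    by (intro sum.cong) (auto simp: fls_X_inv_power_times_conv_shift(2))
  also have "\<dots> = (\<Sum>j\<in>{..<dim_vec v} \<inter> {j. i = - int j}. v $ j)"
    by (simp add: sum.inter_restrict)
  also have "{..<dim_vec v} \<inter> {j. i = - int j} =
      (if - int (dim_vec v) < i \<and> i \<le> 0 then {nat (- i)} else {})"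
    by auto
  finally show ?thesis by simp
qed

lemma fls_of_vec_mult_nth:
  "(fls_of_vec v * f) $$ i = (\<Sum>j<dim_vec v. v $ j * f $$ (i + int j))"
  unfolding fls_of_vec_def sum_distrib_right fls_nth_sum
  by (simp add: mult.assoc fls_X_inv_power_times_conv_shift(1))

lemma fls_of_vec_eq_0_iff: "fls_of_vec v = 0 \<longleftrightarrow> v = 0\<^sub>v (dim_vec v)"
proof
  assume "fls_of_vec v = 0"
  then have "v $ j = 0" if "j < dim_vec v" for j
    using fls_of_vec_nth[of v "- int j"] that by simp
  then show "v = 0\<^sub>v (dim_vec v)" by (auto simp: vec_eq_iff)
next
  assume "v = 0\<^sub>v (dim_vec v)"
  then have "v $ j = 0" if "j < dim_vec v" for j
    using that by (metis index_zero_vec(1))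
  then show "fls_of_vec v = 0" by (auto simp: fls_eq_iff fls_of_vec_nth)
qed

lemma fls_of_vec_coefficients:
  assumes "fls_vanishes_above q 0" "fls_vanishes_below q (1 - int n)"
  shows "q = fls_of_vec (vec n (\<lambda>j. q $$ (- int j)))"
proof (rule fls_eqI)
  fix i
  show "q $$ i = fls_of_vec (vec n (\<lambda>j. q $$ (- int j))) $$ i"
    using assms by (auto simp: fls_of_vec_nth fls_vanishes_above_def fls_vanishes_below_def)
qed

lemma toeplitz_singular_iff_vec:
  "toeplitz_singular n f \<longleftrightarrow>
    (\<exists>v \<in> carrier_vec n. v \<noteq> 0\<^sub>v n \<and> (\<forall>i\<in>{1..int n}. (fls_of_vec v * f) $$ i = 0))"
proof
  assume "toeplitz_singular n f"
  then obtain q where q: "q \<noteq> 0" "fls_vanishes_above q 0" "fls_vanishes_below q (1 - int n)"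
    and qf: "\<forall>i\<in>{1..int n}. (q * f) $$ i = 0"
    unfolding toeplitz_singular_def by blast
  define v where "v = vec n (\<lambda>j. q $$ (- int j))"
  have v: "v \<in> carrier_vec n" by (simp add: v_def)
  have q_eq: "q = fls_of_vec v"
    unfolding v_def using q(2,3) by (rule fls_of_vec_coefficients)
  with q(1) v have "v \<noteq> 0\<^sub>v n" by (auto simp: fls_of_vec_eq_0_iff)
  with v qf q_eq show "\<exists>v \<in> carrier_vec n. v \<noteq> 0\<^sub>v n \<and> (\<forall>i\<in>{1..int n}. (fls_of_vec v * f) $$ i = 0)"
    by blast
next
  assume "\<exists>v \<in> carrier_vec n. v \<noteq> 0\<^sub>v n \<and> (\<forall>i\<in>{1..int n}. (fls_of_vec v * f) $$ i = 0)"
  then obtain v where "v \<in> carrier_vec n" "v \<noteq> 0\<^sub>v n" "\<forall>i\<in>{1..int n}. (fls_of_vec v * f) $$ i = 0"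
    by blast
  then show "toeplitz_singular n f"
    unfolding toeplitz_singular_def
    by (intro exI[of _ "fls_of_vec v"])
      (auto simp: fls_of_vec_eq_0_iff fls_of_vec_nth fls_vanishes_above_def fls_vanishes_below_def)
qed

lemma toeplitz_mat_carrier [simp]: "toeplitz_mat n f \<in> carrier_mat n n"
  and dim_row_toeplitz_mat [simp]: "dim_row (toeplitz_mat n f) = n"
  by (simp_all add: toeplitz_mat_def)

lemma toeplitz_mat_mult_vec_nth:
  assumes "v \<in> carrier_vec n" "i < n"
  shows "(toeplitz_mat n f *\<^sub>v v) $ i = (fls_of_vec v * f) $$ (int n - int i)"
proof -
  have "(toeplitz_mat n f *\<^sub>v v) $ i = (\<Sum>j<n. f $$ (int n - int i + int j) * v $ j)"
    using assms by (simp add: toeplitz_mat_def scalar_prod_def lessThan_atLeast0)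
  also have "\<dots> = (fls_of_vec v * f) $$ (int n - int i)"
    unfolding fls_of_vec_mult_nth using assms(1) by (simp add: mult.commute)
  finally show ?thesis .
qed

lemma det_toeplitz_mat_eq_0_iff: "det (toeplitz_mat n f) = 0 \<longleftrightarrow> toeplitz_singular n f"
proof -
  have "toeplitz_mat n f *\<^sub>v v = 0\<^sub>v n \<longleftrightarrow> (\<forall>i\<in>{1..int n}. (fls_of_vec v * f) $$ i = 0)"
    if "v \<in> carrier_vec n" for v
  proof -
    have "toeplitz_mat n f *\<^sub>v v = 0\<^sub>v n \<longleftrightarrow> (\<forall>i<n. (toeplitz_mat n f *\<^sub>v v) $ i = 0)"
      by (auto simp: vec_eq_iff simp del: index_mult_mat_vec)
    also have "\<dots> \<longleftrightarrow> (\<forall>i<n. (fls_of_vec v * f) $$ (int n - int i) = 0)"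
      using that by (auto simp: toeplitz_mat_mult_vec_nth simp del: index_mult_mat_vec)
    also have "\<dots> \<longleftrightarrow> (\<forall>i\<in>{1..int n}. (fls_of_vec v * f) $$ i = 0)"
    proof (intro iffI ballI allI impI)
      fix i :: int
      assume vanish: "\<forall>i<n. (fls_of_vec v * f) $$ (int n - int i) = 0" and i: "i \<in> {1..int n}"
      then have "n - nat i < n" "int n - int (n - nat i) = i" by auto
      with vanish show "(fls_of_vec v * f) $$ i = 0" by metis
    qed auto
    finally show ?thesis .
  qed
  then show ?thesis
    unfolding toeplitz_singular_iff_vec
    by (subst det_0_iff_vec_prod_zero_field[of _ n]) auto
qed

lemma tvar_power_times_Theta_nth:
  "(tvar ^ k * Theta s) $$ i = (if 1 - int k \<le> i then s (nat (i + int k - 1)) else 0)"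
  unfolding tvar_def Theta_def
  by (simp add: fls_X_inv_power_times_conv_shift fls_X_times_conv_shift mult.assoc[symmetric]
      add_diff_eq)

lemma wall_diag_eq_det_toeplitz_mat:
  "wall_diag s m k = det (toeplitz_mat (Suc m) (frac_part (tvar ^ k * Theta s)))"
  unfolding wall_diag_def number_wall_def toeplitz_mat_def
  by (intro arg_cong[where f = det] cong_mat)
    (auto simp: tvar_power_times_Theta_nth sext_def intro!: arg_cong[where f = s])

section \<open>One step of the Euclidean algorithm\<close>

lemma toeplitz_singular_if_vanishes_below:
  assumes "1 \<le> n" "fls_vanishes_below f (int n + 1)"
  shows "toeplitz_singular n f"
  unfolding toeplitz_singular_def
  using assms by (intro exI[of _ 1]) (auto simp: fls_vanishes_above_def fls_vanishes_below_def)

lemma not_toeplitz_singular_subdegree: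
  assumes "f \<noteq> 0" "fls_subdegree f = int n"
  shows "\<not> toeplitz_singular n f"
proof
  assume "toeplitz_singular n f"
  then obtain q where q: "q \<noteq> 0" "fls_vanishes_above q 0" "fls_vanishes_below q (1 - int n)"
    and qf: "\<forall>i\<in>{1..int n}. (q * f) $$ i = 0"
    unfolding toeplitz_singular_def by blast
  have "fls_subdegree q \<in> {1 - int n..0}"
    using q by (simp add: fls_subdegree_le_if_vanishes_above fls_vanishes_below_iff_subdegree)
  then have "fls_subdegree (q * f) \<in> {1..int n}"
    using q(1) assms by simp
  with qf have "(q * f) $$ fls_subdegree (q * f) = 0" by blast
  with q(1) assms(1) show False by simp
qed

lemma fls_subdegree_add_vanishes_below:
  assumes "g \<noteq> 0" "fls_vanishes_below f (fls_subdegree g + 1)"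
  shows "f + g \<noteq> 0" "fls_subdegree (f + g) = fls_subdegree g"
proof -
  have leading: "(f + g) $$ fls_subdegree g \<noteq> 0"
    using assms by (simp add: fls_vanishes_below_def)
  then show "f + g \<noteq> 0" by (rule fls_nonzeroI)
  have "(f + g) $$ i = 0" if "i < fls_subdegree g" for i
    using assms that by (simp add: fls_vanishes_below_def)
  with leading show "fls_subdegree (f + g) = fls_subdegree g"
    by (rule fls_subdegree_eqI)
qed

lemma fls_subdegree_inverse_minus_frac_part:
  fixes f :: "'a::field fls"
  assumes "f \<noteq> 0" "0 \<le> fls_subdegree f"
  shows "fls_subdegree (inverse f - frac_part (inverse f)) = - fls_subdegree f"
  using assms fls_subdegree_minus_frac_part[of "inverse f"] by simp

lemma toeplitz_singular_frac_part_inverse: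
  fixes f :: "'a::field fls"
  assumes f: "f \<noteq> 0" "fls_vanishes_below f 1" and n: "fls_subdegree f < int n"
    and sing: "toeplitz_singular n f"
  shows "toeplitz_singular (n - nat (fls_subdegree f)) (frac_part (inverse f))"
proof -
  define d where "d = fls_subdegree f"
  define g where "g = frac_part (inverse f)"
  define a where "a = inverse f - g"
  obtain q where q: "q \<noteq> 0" "fls_vanishes_above q 0" "fls_vanishes_below q (1 - int n)"
    and qf: "\<forall>i\<in>{1..int n}. (q * f) $$ i = 0"
    using sing unfolding toeplitz_singular_def by blast
  define r where "r = frac_part (q * f)"
  define p where "p = q * f - r"
  have d: "1 \<le> d" using f by (simp add: d_def fls_vanishes_below_iff_subdegree)
  have n': "int (n - nat d) = int n - d" using n d by (simp add: d_def)
  have r: "fls_vanishes_below r (int n + 1)"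
    using qf by (auto simp: r_def fls_vanishes_below_def)
  have "fls_subdegree (q * f) \<le> d"
    using q f(1) by (simp add: d_def fls_subdegree_le_if_vanishes_above)
  then have "q * f \<noteq> r"
    using r q(1) f(1) n by (auto simp: d_def fls_vanishes_below_iff_subdegree)
  then have "p \<noteq> 0" by (simp add: p_def)
  moreover have "fls_vanishes_above p 0" by (simp add: p_def r_def)
  moreover have "fls_vanishes_below p (1 - int (n - nat d))"
  proof -
    have "fls_vanishes_below (q * f) (1 - (int n - d))"
      using fls_vanishes_below_mult[OF q(3) fls_vanishes_below_subdegree[of f]]
      by (simp add: d_def algebra_simps)
    then show ?thesis unfolding p_def r_def n' by (rule fls_vanishes_below_minus_frac_part)
  qed
  moreover have "(p * g) $$ i = 0" if i: "i \<in> {1..int (n - nat d)}" for i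
  proof -
    have "inverse f * f = 1" using f(1) by simp
    then have pg: "p * g = q - r * inverse f - p * a"
      unfolding p_def a_def by (simp add: algebra_simps)
    have "q $$ i = 0" using q(2) i by (simp add: fls_vanishes_above_def)
    moreover have "fls_vanishes_below (r * inverse f) (int n + 1 - d)"
      using fls_vanishes_below_mult[OF r fls_vanishes_below_subdegree[of "inverse f"]]
      by (simp add: d_def)
    then have "(r * inverse f) $$ i = 0" using i n' by (simp add: fls_vanishes_below_def)
    moreover have "fls_vanishes_above (p * a) 0"
      using fls_vanishes_above_mult[OF \<open>fls_vanishes_above p 0\<close>, of a 0] by (simp add: a_def g_def)
    then have "(p * a) $$ i = 0" using i by (simp add: fls_vanishes_above_def)
    ultimately show ?thesis unfolding pg by simp
  qed
  ultimately show ?thesis unfolding toeplitz_singular_def g_def d_def by blast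
qed

lemma toeplitz_singular_if_frac_part_inverse:
  fixes f :: "'a::field fls"
  assumes f: "f \<noteq> 0" "fls_vanishes_below f 1" and n: "fls_subdegree f < int n"
    and sing: "toeplitz_singular (n - nat (fls_subdegree f)) (frac_part (inverse f))"
  shows "toeplitz_singular n f"
proof -
  define d where "d = fls_subdegree f"
  define g where "g = frac_part (inverse f)"
  define a where "a = inverse f - g"
  have d: "1 \<le> d" using f by (simp add: d_def fls_vanishes_below_iff_subdegree)
  have n': "int (n - nat d) = int n - d" using n d by (simp add: d_def)
  obtain q' where q': "q' \<noteq> 0" "fls_vanishes_above q' 0" "fls_vanishes_below q' (1 - (int n - d))"
    and q'g: "\<forall>i\<in>{1..int n - d}. (q' * g) $$ i = 0"
    using sing n' unfolding toeplitz_singular_def g_def d_def by auto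
  define r where "r = frac_part (q' * g)"
  define p where "p = q' * g - r"
  \<comment> \<open>q is the polynomial part of q' / f\<close>
  define q where "q = p + q' * a"
  have a: "fls_vanishes_above a 0" "fls_subdegree a = - d"
    using f d fls_subdegree_inverse_minus_frac_part[of f] by (simp_all add: a_def g_def d_def)
  have p: "fls_vanishes_above p 0" "fls_vanishes_below p (fls_subdegree q' + 1)"
    using fls_vanishes_below_mult[OF fls_vanishes_below_subdegree[of q'] fls_vanishes_below_frac_part]
    by (simp_all add: p_def r_def g_def fls_vanishes_below_minus_frac_part)
  have "a \<noteq> 0" using a(2) d by auto
  with q'(1) a(2) have q'a: "q' * a \<noteq> 0" "fls_subdegree (q' * a) = fls_subdegree q' - d"
    by simp_all
  have "fls_vanishes_below p (fls_subdegree (q' * a) + 1)"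
    using p(2) d q'a(2) by (auto intro: fls_vanishes_below_mono)
  from fls_subdegree_add_vanishes_below[OF q'a(1) this]
  have "q \<noteq> 0" "fls_subdegree q = fls_subdegree q' - d"
    using q'a(2) by (simp_all add: q_def)
  moreover have "fls_vanishes_above q 0"
    using p(1) fls_vanishes_above_mult[OF q'(2) a(1)] by (simp add: q_def fls_vanishes_above_def)
  moreover have "fls_vanishes_below q (1 - int n)"
    using q'(1,3) \<open>fls_subdegree q = fls_subdegree q' - d\<close>
    by (simp add: fls_vanishes_below_iff_subdegree)
  moreover have "(q * f) $$ i = 0" if i: "i \<in> {1..int n}" for i
  proof -
    have "inverse f * f = 1" using f(1) by simp
    then have qf: "q * f = q' - r * f"
      unfolding q_def p_def a_def by (simp add: algebra_simps)
    have "q' $$ i = 0" using q'(2) i by (simp add: fls_vanishes_above_def)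
    moreover have "fls_vanishes_below r (int n - d + 1)"
      using q'g by (auto simp: r_def fls_vanishes_below_def)
    then have "fls_vanishes_below (r * f) (int n + 1)"
      using fls_vanishes_below_mult[OF _ fls_vanishes_below_subdegree[of f]] by (fastforce simp: d_def)
    then have "(r * f) $$ i = 0" using i by (simp add: fls_vanishes_below_def)
    ultimately show ?thesis unfolding qf by simp
  qed
  ultimately show ?thesis unfolding toeplitz_singular_def by blast
qed

lemma toeplitz_singular_frac_part_inverse_iff:
  fixes f :: "'a::field fls"
  assumes "f \<noteq> 0" "fls_vanishes_below f 1" "fls_subdegree f < int n"
  shows "toeplitz_singular n f \<longleftrightarrow>
    toeplitz_singular (n - nat (fls_subdegree f)) (frac_part (inverse f))"
  using assms toeplitz_singular_frac_part_inverse toeplitz_singular_if_frac_part_inverse by blast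

section \<open>Continued fractions\<close>

lemma cf_rem_Suc_frac_part_inverse: "cf_rem f (Suc l) = cf_rem (frac_part (inverse f)) l"
  by (induction l) auto

lemma cf_quot_Suc_frac_part_inverse:
  "1 \<le> i \<Longrightarrow> cf_quot f (Suc i) = cf_quot (frac_part (inverse f)) i"
  unfolding cf_quot_def using cf_rem_Suc_frac_part_inverse[of f "i - 1"] by simp

lemma cf_has_quot_Suc_iff:
  "1 \<le> j \<Longrightarrow> cf_has_quot f (Suc j) \<longleftrightarrow> f \<noteq> 0 \<and> cf_has_quot (frac_part (inverse f)) j"
  unfolding cf_has_quot_def All_less_Suc2 cf_rem_Suc_frac_part_inverse by auto

lemma degree_poly_part:
  fixes h :: "'a::field fls"
  assumes "h \<noteq> 0" "fls_subdegree h \<le> 0"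
  shows "degree (poly_part h) = nat (- fls_subdegree h)"
proof -
  define N where "N = nat (- fls_subdegree h)"
  have coeff: "coeff (poly_part h) i = (if i \<le> N then h $$ (- int i) else 0)" for i
    unfolding poly_part_def N_def[symmetric] coeff_sum coeff_monom by (simp add: sum.delta)
  have "coeff (poly_part h) N \<noteq> 0" unfolding coeff using assms N_def by simp
  then have "N \<le> degree (poly_part h)" by (rule le_degree)
  moreover have "degree (poly_part h) \<le> N" by (rule degree_le) (simp add: coeff)
  ultimately show ?thesis using N_def by simp
qed

lemma degree_cf_quot_1:
  fixes f :: "'a::field fls"
  assumes "f \<noteq> 0" "0 \<le> fls_subdegree f"
  shows "degree (cf_quot f 1) = nat (fls_subdegree f)"
  using assms by (simp add: cf_quot_def degree_poly_part)

lemma sum_degree_cf_quot_Suc: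
  "(\<Sum>i=1..Suc j. degree (cf_quot f i)) =
    degree (cf_quot f 1) + (\<Sum>i=1..j. degree (cf_quot (frac_part (inverse f)) i))"
proof -
  have "(\<Sum>i=1..Suc j. degree (cf_quot f i)) =
      degree (cf_quot f 1) + (\<Sum>i=Suc 1..Suc j. degree (cf_quot f i))"
    by (simp add: sum.atLeast_Suc_atMost)
  also have "(\<Sum>i=Suc 1..Suc j. degree (cf_quot f i)) = (\<Sum>i=1..j. degree (cf_quot f (Suc i)))"
    by (rule sum.shift_bounds_cl_Suc_ivl)
  also have "\<dots> = (\<Sum>i=1..j. degree (cf_quot (frac_part (inverse f)) i))"
    by (intro sum.cong) (auto simp: cf_quot_Suc_frac_part_inverse)
  finally show ?thesis .
qed

lemma subdegree_le_sum_degree_cf_quot: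
  fixes f :: "'a::field fls"
  assumes "cf_has_quot f j" "0 \<le> fls_subdegree f"
  shows "nat (fls_subdegree f) \<le> (\<Sum>i=1..j. degree (cf_quot f i))"
proof -
  have "f \<noteq> 0" "1 \<le> j" using assms(1) by (auto simp: cf_has_quot_def)
  then show ?thesis
    using member_le_sum[of 1 "{1..j}" "\<lambda>i. degree (cf_quot f i)"] degree_cf_quot_1[OF _ assms(2)]
    by simp
qed

text \<open>deg A_1 + ... + deg A_j is the degree of the denominator of the j-th convergent.\<close>

definition convergent_degree :: "'a::field fls \<Rightarrow> nat \<Rightarrow> bool" where
  "convergent_degree f n \<longleftrightarrow> (\<exists>j. cf_has_quot f j \<and> n = (\<Sum>i=1..j. degree (cf_quot f i)))"

lemma not_convergent_degree_0 [simp]: "\<not> convergent_degree (0 :: 'a::field fls) n"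
proof
  assume "convergent_degree (0 :: 'a fls) n"
  then obtain j where "cf_has_quot (0 :: 'a fls) j"
    unfolding convergent_degree_def by blast
  then have "0 < j" "\<forall>l<j. cf_rem 0 l \<noteq> (0 :: 'a fls)"
    by (auto simp: cf_has_quot_def)
  then have "cf_rem 0 0 \<noteq> (0 :: 'a fls)" by blast
  then show False by simp
qed

lemma convergent_degree_subdegree:
  "f \<noteq> 0 \<Longrightarrow> 0 \<le> fls_subdegree f \<Longrightarrow> convergent_degree f (nat (fls_subdegree f))"
  unfolding convergent_degree_def using degree_cf_quot_1[of f]
  by (intro exI[of _ 1]) (simp add: cf_has_quot_def)

lemma convergent_degree_frac_part_inverse_iff:
  fixes f :: "'a::field fls"
  assumes f: "f \<noteq> 0" "0 \<le> fls_subdegree f" and n: "fls_subdegree f < int n"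
  shows "convergent_degree f n \<longleftrightarrow>
    convergent_degree (frac_part (inverse f)) (n - nat (fls_subdegree f))"
    (is "_ \<longleftrightarrow> convergent_degree ?g ?n'")
proof
  assume "convergent_degree f n"
  then obtain j where j: "cf_has_quot f j" "n = (\<Sum>i=1..j. degree (cf_quot f i))"
    unfolding convergent_degree_def by blast
  have "j \<noteq> 1" using j n f(2) degree_cf_quot_1[OF f] by auto
  with j(1) obtain j' where j': "j = Suc j'" "1 \<le> j'"
    by (cases j) (auto simp: cf_has_quot_def)
  have "cf_has_quot ?g j'" using j(1) j' cf_has_quot_Suc_iff[of j' f] by simp
  moreover have "?n' = (\<Sum>i=1..j'. degree (cf_quot ?g i))"
    using j(2) j'(1) sum_degree_cf_quot_Suc[of f j'] degree_cf_quot_1[OF f] by simp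
  ultimately show "convergent_degree ?g ?n'" unfolding convergent_degree_def by blast
next
  assume "convergent_degree ?g ?n'"
  then obtain j where j: "cf_has_quot ?g j" "?n' = (\<Sum>i=1..j. degree (cf_quot ?g i))"
    unfolding convergent_degree_def by blast
  then have "cf_has_quot f (Suc j)"
    using f(1) cf_has_quot_Suc_iff[of j f] by (simp add: cf_has_quot_def)
  moreover have "n = (\<Sum>i=1..Suc j. degree (cf_quot f i))"
    using j(2) n sum_degree_cf_quot_Suc[of f j] degree_cf_quot_1[OF f] by simp
  ultimately show "convergent_degree f n" unfolding convergent_degree_def by blast
qed

lemma toeplitz_singular_iff_not_convergent_degree:
  fixes f :: "'a::field fls"
  assumes "fls_vanishes_below f 1" "1 \<le> n"
  shows "toeplitz_singular n f \<longleftrightarrow> \<not> convergent_degree f n"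
  using assms
proof (induction n arbitrary: f rule: less_induct)
  case (less n f)
  show ?case
  proof (cases "f = 0")
    case True
    then show ?thesis
      using less.prems by (simp add: toeplitz_singular_if_vanishes_below fls_vanishes_below_def)
  next
    case f: False
    define d where "d = fls_subdegree f"
    have d: "1 \<le> d"
      using f less.prems(1) by (simp add: d_def fls_vanishes_below_iff_subdegree)
    consider "int n < d" | "int n = d" | "d < int n" by linarith
    then show ?thesis
    proof cases
      case 1
      then have "toeplitz_singular n f"
        using less.prems(2) by (intro toeplitz_singular_if_vanishes_below)
          (simp_all add: d_def fls_vanishes_below_iff_subdegree)
      moreover have "\<not> convergent_degree f n"
      proof
        assume "convergent_degree f n"
        then have "nat d \<le> n"
          using d subdegree_le_sum_degree_cf_quot[of f] by (auto simp: convergent_degree_def d_def)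
        with 1 show False by simp
      qed
      ultimately show ?thesis by simp
    next
      case 2
      then have "nat d = n" by simp
      then show ?thesis
        using 2 f d not_toeplitz_singular_subdegree[of f n] convergent_degree_subdegree[of f]
        by (simp add: d_def)
    next
      case 3
      define g where "g = frac_part (inverse f)"
      have "n - nat d < n" "1 \<le> n - nat d" using 3 d by auto
      then have "toeplitz_singular (n - nat d) g \<longleftrightarrow> \<not> convergent_degree g (n - nat d)"
        by (intro less.IH) (simp_all add: g_def)
      then show ?thesis
        using 3 d toeplitz_singular_frac_part_inverse_iff[OF f less.prems(1)]
          convergent_degree_frac_part_inverse_iff[OF f]
        by (simp add: d_def g_def)
    qed
  qed
qed

theorem lemma4p2:
  fixes s :: "nat \<Rightarrow> 'a::field" and k m :: nat
  shows "wall_diag s m k \<noteq> 0 \<longleftrightarrow>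
    (\<exists>j \<ge> 1. cf_has_quot (frac_part (tvar ^ k * Theta s)) j \<and>
       m = (\<Sum>i = 1..j. degree (cf_quot (frac_part (tvar ^ k * Theta s)) i)) - 1)"
proof -
  define F where "F = frac_part (tvar ^ k * Theta s)"
  have F: "fls_vanishes_below F 1" by (simp add: F_def)
  have "wall_diag s m k \<noteq> 0 \<longleftrightarrow> \<not> toeplitz_singular (Suc m) F"
    by (simp add: F_def wall_diag_eq_det_toeplitz_mat det_toeplitz_mat_eq_0_iff)
  also have "\<dots> \<longleftrightarrow> convergent_degree F (Suc m)"
    using toeplitz_singular_iff_not_convergent_degree[OF F] by simp
  also have "\<dots> \<longleftrightarrow> (\<exists>j \<ge> 1. cf_has_quot F j \<and> m = (\<Sum>i = 1..j. degree (cf_quot F i)) - 1)"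
  proof -
    have "1 \<le> (\<Sum>i = 1..j. degree (cf_quot F i))" if "cf_has_quot F j" for j
    proof -
      have "F \<noteq> 0" using that by (auto simp: cf_has_quot_def)
      then have "1 \<le> fls_subdegree F" using F by (simp add: fls_vanishes_below_iff_subdegree)
      then show ?thesis using subdegree_le_sum_degree_cf_quot[OF that] by linarith
    qed
    then show ?thesis unfolding convergent_degree_def cf_has_quot_def by fastforce
  qed
  finally show ?thesis unfolding F_def .
qed

end
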